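(* Let $\varrho\in C(\mathbb{C};\mathbb{C})$ be real differentiable in $z_0\in\mathbb{C}$ with $(\partial_{\mathrm{wirt}}\varrho(z_0),\overline{\partial}_{\mathrm{wirt}}\varrho(z_0))\neq(0,0)$, let $K\subseteq\mathbb{C}$ be compact and $\varepsilon>0$. (i) If $\partial_{\mathrm{wirt}}\varrho(z_0)\neq0$ and $\overline{\partial}_{\mathrm{wirt}}\varrho(z_0)=0$, there are $\mathbb{C}$-affine maps $\phi,\psi:\mathbb{C}\to\mathbb{C}$ with $\sup_{z\in K}|(\psi\circ\varrho\circ\phi)(z)-z|<\varepsilon$. (ii) If $\partial_{\mathrm{wirt}}\varrho(z_0)=0$ and $\overline{\partial}_{\mathrm{wirt}}\varrho(z_0)\neq0$, there are $\mathbb{C}$-affine maps $\phi,\psi:\mathbb{C}\to\mathbb{C}$ with $\sup_{z\in K}|(\psi\circ\varrho\circ\phi)(z)-\overline{z}|<\varepsilon$. (iii) If $\partial_{\mathrm{wirt}}\varrho(z_0)\neq0\neq\overline{\partial}_{\mathrm{wirt}}\varrho(z_0)$, there are $\mathbb{C}$-affine maps $\phi:\mathbb{C}\to\mathbb{C}^2$ and $\psi:\mathbb{C}^2\to\mathbb{C}^2$ with $\sup_{z\in K}\|(\psi\circ\varrho^{\times2}\circ\phi)(z)-(z,\overline{z})\|_{\mathbb{C}^2}<\varepsilon$.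
   Context: Wirtinger derivatives: $\partial_{\mathrm{wirt}}\varrho=\frac12\left(\frac{\partial\varrho}{\partial x}-\mathrm{i}\frac{\partial\varrho}{\partial y}\right)$, $\overline{\partial}_{\mathrm{wirt}}\varrho=\frac12\left(\frac{\partial\varrho}{\partial x}+\mathrm{i}\frac{\partial\varrho}{\partial y}\right)$. $\varrho$ is real differentiable at $z_0$ if the partial derivatives exist at $z_0$ and $\lim_{h\to0}\frac{\varrho(z_0+h)-\varrho(z_0)-\frac{\partial\varrho}{\partial x}(z_0)\mathrm{Re}(h)-\frac{\partial\varrho}{\partial y}(z_0)\mathrm{Im}(h)}{h}=0$. A map $\mathbb{C}^a\to\mathbb{C}^b$ is $\mathbb{C}$-affine if it has the form $z\mapsto Az+b$ with complex $A,b$. $\varrho^{\times2}(z_1,z_2)=(\varrho(z_1),\varrho(z_2))$. *)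

theory Defs
  imports "HOL-Analysis.Analysis"
begin

definition has_partial_x :: "(complex \<Rightarrow> complex) \<Rightarrow> complex \<Rightarrow> complex \<Rightarrow> bool" where
  "has_partial_x \<rho> z D \<longleftrightarrow> ((\<lambda>t::real. \<rho> (z + complex_of_real t)) has_vector_derivative D) (at 0)"

definition has_partial_y :: "(complex \<Rightarrow> complex) \<Rightarrow> complex \<Rightarrow> complex \<Rightarrow> bool" where
  "has_partial_y \<rho> z D \<longleftrightarrow> ((\<lambda>t::real. \<rho> (z + \<i> * complex_of_real t)) has_vector_derivative D) (at 0)"

definition partial_x :: "(complex \<Rightarrow> complex) \<Rightarrow> complex \<Rightarrow> complex" where
  "partial_x \<rho> z = (THE D. has_partial_x \<rho> z D)"

definition partial_y :: "(complex \<Rightarrow> complex) \<Rightarrow> complex \<Rightarrow> complex" where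
  "partial_y \<rho> z = (THE D. has_partial_y \<rho> z D)"

definition real_differentiable_at :: "(complex \<Rightarrow> complex) \<Rightarrow> complex \<Rightarrow> bool" where
  "real_differentiable_at \<rho> z0 \<longleftrightarrow>
     (\<exists>Dx. has_partial_x \<rho> z0 Dx) \<and> (\<exists>Dy. has_partial_y \<rho> z0 Dy) \<and>
     ((\<lambda>h. (\<rho> (z0 + h) - \<rho> z0 - partial_x \<rho> z0 * complex_of_real (Re h)
              - partial_y \<rho> z0 * complex_of_real (Im h)) / h) \<longlongrightarrow> 0) (at 0)"

definition wirt :: "(complex \<Rightarrow> complex) \<Rightarrow> complex \<Rightarrow> complex" where
  "wirt \<rho> z = (partial_x \<rho> z - \<i> * partial_y \<rho> z) / 2"

definition wirt_bar :: "(complex \<Rightarrow> complex) \<Rightarrow> complex \<Rightarrow> complex" where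
  "wirt_bar \<rho> z = (partial_x \<rho> z + \<i> * partial_y \<rho> z) / 2"

text \<open>C-affine maps; C^2 is modelled as complex \<times> complex (Euclidean product norm).\<close>

definition affine_CC :: "(complex \<Rightarrow> complex) \<Rightarrow> bool" where
  "affine_CC f \<longleftrightarrow> (\<exists>a b. f = (\<lambda>z. a * z + b))"

definition affine_CC2 :: "(complex \<Rightarrow> complex \<times> complex) \<Rightarrow> bool" where
  "affine_CC2 f \<longleftrightarrow> (\<exists>a1 a2 b1 b2. f = (\<lambda>z. (a1 * z + b1, a2 * z + b2)))"

definition affine_C2C2 :: "(complex \<times> complex \<Rightarrow> complex \<times> complex) \<Rightarrow> bool" where
  "affine_C2C2 f \<longleftrightarrow> (\<exists>a11 a12 a21 a22 b1 b2.
      f = (\<lambda>(z1, z2). (a11 * z1 + a12 * z2 + b1, a21 * z1 + a22 * z2 + b2)))"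

definition prod_map2 :: "(complex \<Rightarrow> complex) \<Rightarrow> complex \<times> complex \<Rightarrow> complex \<times> complex" where
  "prod_map2 \<rho> = (\<lambda>(z1, z2). (\<rho> z1, \<rho> z2))"

end

theory Submission
  imports Defs
begin

text \<open>
  Let \<open>L h = wirt \<rho> z0 * h + wirt_bar \<rho> z0 * cnj h\<close> be the real differential of \<open>\<rho>\<close> at \<open>z0\<close>.
  Real differentiability gives \<open>\<rho> (z0 + \<delta> z) = \<rho> z0 + \<delta> L z + o(\<delta>)\<close> as \<open>\<delta> \<rightarrow> 0+\<close>, uniformly
  for \<open>z\<close> in a bounded set, so after the affine blow-up \<open>z \<mapsto> z0 + \<delta> z\<close> and the affine
  renormalisation \<open>u \<mapsto> (u - \<rho> z0) / \<delta>\<close> the function \<open>\<rho>\<close> is uniformly close to \<open>L\<close> on \<open>K\<close>.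
  In cases (i) and (ii) \<open>L\<close> is a nonzero multiple of \<open>z\<close> or of \<open>cnj z\<close>. In case (iii) it is
  neither, but \<open>L z - \<i> L (\<i> z) = 2 wirt \<rho> z0 z\<close> and \<open>L z + \<i> L (\<i> z) = 2 wirt_bar \<rho> z0 cnj z\<close>;
  so two copies of \<open>\<rho>\<close>, evaluated at \<open>z0 + \<delta> z\<close> and \<open>z0 + \<i> \<delta> z\<close>, are mixed linearly to
  recover both \<open>z\<close> and \<open>cnj z\<close>.
\<close>

lemma little_o_rescaled_uniformly_small:
  fixes N :: "'a::real_normed_vector \<Rightarrow> 'b::real_normed_vector"
  assumes lim: "((\<lambda>h. norm (N h) / norm h) \<longlongrightarrow> 0) (at 0)"
    and N0: "N 0 = 0" and S: "bounded S" and e: "e > 0"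
  shows "\<forall>\<^sub>F \<delta> in at_right 0. \<forall>z\<in>S. norm (N (\<delta> *\<^sub>R z)) < e * \<delta>"
proof -
  obtain M where M: "M > 0" "\<And>z. z \<in> S \<Longrightarrow> norm z \<le> M"
    using S bounded_pos by blast
  have "\<forall>\<^sub>F h in at 0. norm (N h) / norm h < e / M"
    using order_tendstoD(2)[OF lim] e M by simp
  then obtain d where d: "d > 0" "\<And>h. h \<noteq> 0 \<Longrightarrow> dist h 0 < d \<Longrightarrow> norm (N h) / norm h < e / M"
    unfolding eventually_at by blast
  have "norm (N (\<delta> *\<^sub>R z)) < e * \<delta>" if \<delta>: "0 < \<delta>" "\<delta> < d / M" and z: "z \<in> S" for \<delta> z
  proof (cases "z = 0")
    case True
    then show ?thesis using N0 e \<delta> by simp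
  next
    case False
    have "norm (\<delta> *\<^sub>R z) \<le> \<delta> * M"
      using M(2)[OF z] \<delta> by (simp add: mult_left_mono)
    also have "\<dots> < d"
      using \<delta> M by (simp add: pos_less_divide_eq)
    finally have "norm (N (\<delta> *\<^sub>R z)) / norm (\<delta> *\<^sub>R z) < e / M"
      using d(2)[of "\<delta> *\<^sub>R z"] False \<delta> by simp
    then have "norm (N (\<delta> *\<^sub>R z)) < e / M * (\<delta> * norm z)"
      using False \<delta> by (simp add: pos_divide_less_eq)
    also have "\<dots> \<le> e / M * (\<delta> * M)"
      using M(2)[OF z] e M \<delta> by (intro mult_left_mono) auto
    finally show ?thesis
      using M by simp
  qed
  then show ?thesis
    unfolding eventually_at_right_field using d M by (auto intro!: exI[of _ "d / M"])
qed

definition wirt_differential :: "(complex \<Rightarrow> complex) \<Rightarrow> complex \<Rightarrow> complex \<Rightarrow> complex" where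
  "wirt_differential \<rho> z0 h = wirt \<rho> z0 * h + wirt_bar \<rho> z0 * cnj h"

definition blowup :: "(complex \<Rightarrow> complex) \<Rightarrow> complex \<Rightarrow> real \<Rightarrow> complex \<Rightarrow> complex" where
  "blowup \<rho> z0 \<delta> z = (\<rho> (z0 + of_real \<delta> * z) - \<rho> z0) / of_real \<delta>"

lemma wirt_differential_eq_partials:
  "wirt_differential \<rho> z0 h
     = partial_x \<rho> z0 * of_real (Re h) + partial_y \<rho> z0 * of_real (Im h)"
  by (cases h) (simp add: wirt_differential_def wirt_def wirt_bar_def Complex_eq field_simps)

lemma wirt_differential_of_real_mult:
  "wirt_differential \<rho> z0 (of_real \<delta> * h) = of_real \<delta> * wirt_differential \<rho> z0 h"
  by (simp add: wirt_differential_def algebra_simps)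

lemma real_differentiable_at_wirt_remainder:
  assumes "real_differentiable_at \<rho> z0"
  shows "((\<lambda>h. (\<rho> (z0 + h) - \<rho> z0 - wirt_differential \<rho> z0 h) / h) \<longlongrightarrow> 0) (at 0)"
  using assms unfolding real_differentiable_at_def wirt_differential_eq_partials
  by (simp add: diff_diff_eq add.assoc)

lemma blowup_uniform_limit:
  assumes "real_differentiable_at \<rho> z0" and "bounded S"
  shows "uniform_limit S (blowup \<rho> z0) (wirt_differential \<rho> z0) (at_right 0)"
proof (rule uniform_limitI)
  fix e :: real assume "e > 0"
  define N where "N h = \<rho> (z0 + h) - \<rho> z0 - wirt_differential \<rho> z0 h" for h
  have "((\<lambda>h. norm (N h) / norm h) \<longlongrightarrow> 0) (at 0)"
    using tendsto_norm_zero[OF real_differentiable_at_wirt_remainder[OF assms(1)]]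
    by (simp add: N_def norm_divide)
  moreover have "N 0 = 0"
    by (simp add: N_def wirt_differential_def)
  ultimately have small: "\<forall>\<^sub>F \<delta> in at_right 0. \<forall>z\<in>S. norm (N (\<delta> *\<^sub>R z)) < e * \<delta>"
    using little_o_rescaled_uniformly_small assms(2) \<open>e > 0\<close> by blast
  have rescaled: "blowup \<rho> z0 \<delta> z - wirt_differential \<rho> z0 z = N (\<delta> *\<^sub>R z) / of_real \<delta>"
    if "\<delta> > 0" for \<delta> z
    using that unfolding N_def blowup_def scaleR_conv_of_real wirt_differential_of_real_mult
    by (simp add: field_simps)
  show "\<forall>\<^sub>F \<delta> in at_right 0. \<forall>z\<in>S. dist (blowup \<rho> z0 \<delta> z) (wirt_differential \<rho> z0 z) < e"
    using small eventually_at_right_less[of 0]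
    by eventually_elim (auto simp: dist_norm rescaled norm_divide pos_divide_less_eq)
qed

lemma blowup_approximates_wirt_differential:
  assumes "real_differentiable_at \<rho> z0" and "bounded S" and "\<eta> > 0"
  obtains \<delta> where "\<delta> > 0" "\<And>z. z \<in> S \<Longrightarrow> norm (blowup \<rho> z0 \<delta> z - wirt_differential \<rho> z0 z) < \<eta>"
proof -
  have "\<forall>\<^sub>F \<delta> in at_right 0. \<delta> > 0 \<and> (\<forall>z\<in>S. dist (blowup \<rho> z0 \<delta> z) (wirt_differential \<rho> z0 z) < \<eta>)"
    using eventually_at_right_less uniform_limitD[OF blowup_uniform_limit[OF assms(1,2)] assms(3)]
    by (rule eventually_conj)
  then obtain \<delta> where "\<delta> > 0" "\<forall>z\<in>S. dist (blowup \<rho> z0 \<delta> z) (wirt_differential \<rho> z0 z) < \<eta>"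
    using eventually_happens'[OF trivial_limit_at_right_real] by blast
  then show ?thesis
    using that by (auto simp: dist_norm)
qed

lemma rho_at_rescaled_point:
  "\<delta> \<noteq> 0 \<Longrightarrow> \<rho> (of_real \<delta> * z + z0) = \<rho> z0 + of_real \<delta> * blowup \<rho> z0 \<delta> z"
  by (simp add: blowup_def add.commute)

lemma affine_conjugate_approximates_differential:
  assumes rdiff: "real_differentiable_at \<rho> z0" and S: "bounded S" and \<epsilon>: "\<epsilon> > 0"
    and c: "c \<noteq> 0" and T: "\<And>h. wirt_differential \<rho> z0 h = c * T h"
  shows "\<exists>\<phi> \<psi>. affine_CC \<phi> \<and> affine_CC \<psi> \<and> (\<forall>z\<in>S. norm ((\<psi> \<circ> \<rho> \<circ> \<phi>) z - T z) < \<epsilon>)"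
proof -
  have "\<epsilon> * norm c > 0"
    using \<epsilon> c by simp
  then obtain \<delta> where \<delta>: "\<delta> > 0"
    "\<And>z. z \<in> S \<Longrightarrow> norm (blowup \<rho> z0 \<delta> z - wirt_differential \<rho> z0 z) < \<epsilon> * norm c"
    using blowup_approximates_wirt_differential[OF rdiff S] by blast
  define \<phi> where "\<phi> z = of_real \<delta> * z + z0" for z
  define \<psi> where "\<psi> u = (1 / (c * of_real \<delta>)) * u + (- \<rho> z0 / (c * of_real \<delta>))" for u
  have "\<rho> (\<phi> z) = \<rho> z0 + of_real \<delta> * blowup \<rho> z0 \<delta> z" for z
    using \<delta>(1) by (simp add: \<phi>_def rho_at_rescaled_point)
  then have "(\<psi> \<circ> \<rho> \<circ> \<phi>) z - T z = (blowup \<rho> z0 \<delta> z - wirt_differential \<rho> z0 z) / c" for z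
    using \<delta>(1) c by (simp add: \<psi>_def T field_simps)
  then have "norm ((\<psi> \<circ> \<rho> \<circ> \<phi>) z - T z) < \<epsilon>" if "z \<in> S" for z
    using \<delta>(2)[OF that] c by (simp add: norm_divide pos_divide_less_eq)
  moreover have "affine_CC \<phi>" "affine_CC \<psi>"
    unfolding affine_CC_def \<phi>_def[abs_def] \<psi>_def[abs_def] by blast+
  ultimately show ?thesis
    by blast
qed

lemma wirt_differential_diff_rotated:
  "wirt_differential \<rho> z0 h - \<i> * wirt_differential \<rho> z0 (\<i> * h) = 2 * wirt \<rho> z0 * h"
  by (simp add: wirt_differential_def algebra_simps)

lemma wirt_differential_add_rotated:
  "wirt_differential \<rho> z0 h + \<i> * wirt_differential \<rho> z0 (\<i> * h) = 2 * wirt_bar \<rho> z0 * cnj h"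
  by (simp add: wirt_differential_def algebra_simps)

lemma norm_add_unimodular_div_less:
  fixes x y u c :: complex
  assumes "norm x < \<eta>" "norm y < \<eta>" "norm u = 1" "\<eta> \<le> \<epsilon> / 2 * norm c"
  shows "norm ((x + u * y) / (2 * c)) < \<epsilon> / 2"
proof -
  have c: "norm c > 0"
    using assms(1,4) norm_ge_zero[of x] by (cases "c = 0") auto
  have "norm (x + u * y) < 2 * \<eta>"
    using norm_triangle_ineq[of x "u * y"] assms(1-3) by (simp add: norm_mult)
  also have "\<dots> \<le> \<epsilon> * norm c"
    using assms(4) by simp
  finally show ?thesis
    using c by (simp add: norm_divide norm_mult pos_divide_less_eq)
qed

lemma affine_pair_conjugate_approximates_z_cnj:
  assumes rdiff: "real_differentiable_at \<rho> z0" and S: "bounded S" and \<epsilon>: "\<epsilon> > 0"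
    and w: "wirt \<rho> z0 \<noteq> 0" and wb: "wirt_bar \<rho> z0 \<noteq> 0"
  shows "\<exists>\<phi> \<psi>. affine_CC2 \<phi> \<and> affine_C2C2 \<psi> \<and>
           (\<forall>z\<in>S. norm ((\<psi> \<circ> prod_map2 \<rho> \<circ> \<phi>) z - (z, cnj z)) < \<epsilon>)"
proof -
  define D where "D = wirt_differential \<rho> z0"
  define \<eta> where "\<eta> = \<epsilon> / 2 * min (norm (wirt \<rho> z0)) (norm (wirt_bar \<rho> z0))"
  have "\<eta> > 0"
    using \<epsilon> w wb by (simp add: \<eta>_def)
  moreover have "bounded (S \<union> (\<lambda>z. \<i> * z) ` S)"
    using S bounded_linear_image[OF S bounded_linear_mult_right] by simp
  ultimately obtain \<delta> where \<delta>: "\<delta> > 0"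
    "\<And>z. z \<in> S \<union> (\<lambda>z. \<i> * z) ` S \<Longrightarrow> norm (blowup \<rho> z0 \<delta> z - D z) < \<eta>"
    unfolding D_def using blowup_approximates_wirt_differential[OF rdiff] by metis
  define E1 where "E1 z = blowup \<rho> z0 \<delta> z - D z" for z
  define E2 where "E2 z = blowup \<rho> z0 \<delta> (\<i> * z) - D (\<i> * z)" for z
  define a where "a = 1 / (2 * wirt \<rho> z0 * of_real \<delta>)"
  define b where "b = 1 / (2 * wirt_bar \<rho> z0 * of_real \<delta>)"
  define \<phi> where "\<phi> z = (of_real \<delta> * z + z0, (\<i> * of_real \<delta>) * z + z0)" for z
  define \<psi> where "\<psi> = (\<lambda>(u1, u2). (a * u1 + (- \<i> * a) * u2 + (- (1 - \<i>) * a * \<rho> z0),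
                                    b * u1 + (\<i> * b) * u2 + (- (1 + \<i>) * b * \<rho> z0)))"
  have error_eq: "(\<psi> \<circ> prod_map2 \<rho> \<circ> \<phi>) z - (z, cnj z)
          = ((E1 z - \<i> * E2 z) / (2 * wirt \<rho> z0), (E1 z + \<i> * E2 z) / (2 * wirt_bar \<rho> z0))" for z
  proof -
    have "prod_map2 \<rho> (\<phi> z)
          = (\<rho> z0 + of_real \<delta> * blowup \<rho> z0 \<delta> z, \<rho> z0 + of_real \<delta> * blowup \<rho> z0 \<delta> (\<i> * z))"
      using rho_at_rescaled_point[of \<delta> \<rho> z z0] rho_at_rescaled_point[of \<delta> \<rho> "\<i> * z" z0] \<delta>(1)
      by (simp add: \<phi>_def prod_map2_def ac_simps)
    then have "(\<psi> \<circ> prod_map2 \<rho> \<circ> \<phi>) z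
          = ((blowup \<rho> z0 \<delta> z - \<i> * blowup \<rho> z0 \<delta> (\<i> * z)) / (2 * wirt \<rho> z0),
             (blowup \<rho> z0 \<delta> z + \<i> * blowup \<rho> z0 \<delta> (\<i> * z)) / (2 * wirt_bar \<rho> z0))"
      using \<delta>(1) w wb by (simp add: \<psi>_def a_def b_def field_simps)
    then show ?thesis
      using wirt_differential_diff_rotated[of \<rho> z0 z] wirt_differential_add_rotated[of \<rho> z0 z] w wb
      by (simp add: E1_def E2_def D_def field_simps)
  qed
  have error_bounds: "norm ((E1 z - \<i> * E2 z) / (2 * wirt \<rho> z0)) < \<epsilon> / 2"
    "norm ((E1 z + \<i> * E2 z) / (2 * wirt_bar \<rho> z0)) < \<epsilon> / 2" if "z \<in> S" for z
  proof -
    have E: "norm (E1 z) < \<eta>" "norm (E2 z) < \<eta>"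
      using \<delta>(2) that by (auto simp: E1_def E2_def)
    have "\<eta> \<le> \<epsilon> / 2 * norm (wirt \<rho> z0)" "\<eta> \<le> \<epsilon> / 2 * norm (wirt_bar \<rho> z0)"
      using \<epsilon> by (simp_all add: \<eta>_def mult_left_mono)
    then show "norm ((E1 z - \<i> * E2 z) / (2 * wirt \<rho> z0)) < \<epsilon> / 2"
      and "norm ((E1 z + \<i> * E2 z) / (2 * wirt_bar \<rho> z0)) < \<epsilon> / 2"
      using norm_add_unimodular_div_less[OF E, of "- \<i>"] norm_add_unimodular_div_less[OF E, of \<i>]
      by simp_all
  qed
  have "norm ((\<psi> \<circ> prod_map2 \<rho> \<circ> \<phi>) z - (z, cnj z)) < \<epsilon>" if "z \<in> S" for z
    unfolding error_eq using error_bounds(1,2)[OF that]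
    by (intro le_less_trans[OF norm_Pair_le]) linarith
  moreover have "affine_CC2 \<phi>" "affine_C2C2 \<psi>"
    unfolding affine_CC2_def affine_C2C2_def \<phi>_def[abs_def] \<psi>_def by blast+
  ultimately show ?thesis
    by blast
qed

theorem proposition3p1:
  fixes \<rho> :: "complex \<Rightarrow> complex" and z0 :: complex and K :: "complex set" and \<epsilon> :: real
  assumes cont: "continuous_on UNIV \<rho>"
    and rdiff: "real_differentiable_at \<rho> z0"
    and nz: "(wirt \<rho> z0, wirt_bar \<rho> z0) \<noteq> (0, 0)"
    and K: "compact K"
    and eps: "\<epsilon> > 0"
  shows "(wirt \<rho> z0 \<noteq> 0 \<and> wirt_bar \<rho> z0 = 0 \<longrightarrow>
           (\<exists>\<phi> \<psi>. affine_CC \<phi> \<and> affine_CC \<psi> \<and>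
              (\<forall>z\<in>K. norm ((\<psi> \<circ> \<rho> \<circ> \<phi>) z - z) < \<epsilon>)))
       \<and> (wirt \<rho> z0 = 0 \<and> wirt_bar \<rho> z0 \<noteq> 0 \<longrightarrow>
           (\<exists>\<phi> \<psi>. affine_CC \<phi> \<and> affine_CC \<psi> \<and>
              (\<forall>z\<in>K. norm ((\<psi> \<circ> \<rho> \<circ> \<phi>) z - cnj z) < \<epsilon>)))
       \<and> (wirt \<rho> z0 \<noteq> 0 \<and> wirt_bar \<rho> z0 \<noteq> 0 \<longrightarrow>
           (\<exists>\<phi> \<psi>. affine_CC2 \<phi> \<and> affine_C2C2 \<psi> \<and>
              (\<forall>z\<in>K. norm ((\<psi> \<circ> prod_map2 \<rho> \<circ> \<phi>) z - (z, cnj z)) < \<epsilon>)))"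
proof -
  \<comment> \<open>Neither \<open>cont\<close> nor \<open>nz\<close> is needed: each case carries its own nondegeneracy condition.\<close>
  have K_bounded: "bounded K"
    using K by (rule compact_imp_bounded)
  show ?thesis
    using affine_conjugate_approximates_differential[OF rdiff K_bounded eps, of "wirt \<rho> z0" "\<lambda>z. z"]
      affine_conjugate_approximates_differential[OF rdiff K_bounded eps, of "wirt_bar \<rho> z0" cnj]
      affine_pair_conjugate_approximates_z_cnj[OF rdiff K_bounded eps]
    by (auto simp: wirt_differential_def)
qed

end
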